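(* Let $\mathcal C$ be a class of compact spaces. Then $\mathcal C^{(\perp)}$ coincides with the class of compact spaces $K$ such that every closed subspace of every continuous image of $K$ that belongs to $\mathcal C$ is metrizable.
   Context: For a class $\mathcal C$ of compact spaces, $\mathcal C^{(\perp)}$ is the class of compact spaces $K$ such that every continuous image of any closed subspace of $K$ that belongs to $\mathcal C$ is metrizable. *)

theory Defs
  imports "HOL-Analysis.Analysis"
begin

text \<open>A compact space in the paper's sense: compact Hausdorff.\<close>
definition cpt_space :: "'a topology \<Rightarrow> bool" where
  "cpt_space X \<longleftrightarrow> compact_space X \<and> Hausdorff_space X"

definition in_class :: "'a topology \<Rightarrow> 'c topology set \<Rightarrow> bool" where
  "in_class X \<C> \<longleftrightarrow> (\<exists>Y\<in>\<C>. X homeomorphic_space Y)"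

text \<open>Continuous images of
  subspaces of K are represented on the carrier type of K (no loss, by cardinality).\<close>
definition perp_class :: "'c topology set \<Rightarrow> 'a topology set" where
  "perp_class \<C> = {K. cpt_space K \<and>
     (\<forall>F (L::'a topology) f. closedin K F \<and> cpt_space L \<and>
        continuous_map (subtopology K F) L f \<and> f ` F = topspace L \<and>
        in_class L \<C> \<longrightarrow> metrizable_space L)}"

end

theory Submission
  imports Defs
begin

(*
  One inclusion is immediate: a closed subspace M of a continuous image f(K) is the
  continuous image of the closed set f^-1(M).  For the other, let g map a closed F of K
  onto L.  The adjunction space obtained from K by collapsing every fibre of g to a
  point is a continuous image of K and contains L as the closed image of F.  It is
  compact Hausdorff because the collapsing map is closed: the saturation of a closed C
  is C together with the preimage of the compact set g(C \<inter> F).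
*)

definition quotient_topology :: "'a topology \<Rightarrow> ('a \<Rightarrow> 'b) \<Rightarrow> 'b topology" where
  "quotient_topology X f =
     topology (\<lambda>U. U \<subseteq> f ` topspace X \<and> openin X {x \<in> topspace X. f x \<in> U})"

lemma openin_quotient_topology:
  "openin (quotient_topology X f) U \<longleftrightarrow> U \<subseteq> f ` topspace X \<and> openin X {x \<in> topspace X. f x \<in> U}"
proof -
  have top: "istopology (\<lambda>U. U \<subseteq> f ` topspace X \<and> openin X {x \<in> topspace X. f x \<in> U})"
    unfolding istopology_def
  proof (rule conjI; intro allI impI)
    fix S T
    assume S: "S \<subseteq> f ` topspace X \<and> openin X {x \<in> topspace X. f x \<in> S}"
      and T: "T \<subseteq> f ` topspace X \<and> openin X {x \<in> topspace X. f x \<in> T}"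
    have "{x \<in> topspace X. f x \<in> S \<inter> T} =
        {x \<in> topspace X. f x \<in> S} \<inter> {x \<in> topspace X. f x \<in> T}"
      by auto
    moreover have "openin X ({x \<in> topspace X. f x \<in> S} \<inter> {x \<in> topspace X. f x \<in> T})"
      using S T by (intro openin_Int) auto
    ultimately show "S \<inter> T \<subseteq> f ` topspace X \<and> openin X {x \<in> topspace X. f x \<in> S \<inter> T}"
      using S T by auto
  next
    fix \<U>
    assume \<U>: "\<forall>U\<in>\<U>. U \<subseteq> f ` topspace X \<and> openin X {x \<in> topspace X. f x \<in> U}"
    have "{x \<in> topspace X. f x \<in> \<Union>\<U>} = (\<Union>U\<in>\<U>. {x \<in> topspace X. f x \<in> U})"
      by auto
    moreover have "openin X (\<Union>U\<in>\<U>. {x \<in> topspace X. f x \<in> U})"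
      using \<U> by (intro openin_Union) auto
    ultimately show "\<Union>\<U> \<subseteq> f ` topspace X \<and> openin X {x \<in> topspace X. f x \<in> \<Union>\<U>}"
      using \<U> by auto
  qed
  show ?thesis
    unfolding quotient_topology_def topology_inverse'[OF top] by (rule refl)
qed

lemma topspace_quotient_topology: "topspace (quotient_topology X f) = f ` topspace X"
proof (rule subset_antisym)
  show "topspace (quotient_topology X f) \<subseteq> f ` topspace X"
    using openin_quotient_topology[of X f "topspace (quotient_topology X f)"] by simp
  have "{x \<in> topspace X. f x \<in> f ` topspace X} = topspace X"
    by blast
  then have "openin (quotient_topology X f) (f ` topspace X)"
    by (simp add: openin_quotient_topology)
  then show "f ` topspace X \<subseteq> topspace (quotient_topology X f)"
    by (rule openin_subset)
qed

lemma quotient_map_quotient_topology: "quotient_map X (quotient_topology X f) f"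
  unfolding quotient_map_def topspace_quotient_topology openin_quotient_topology by simp

lemma quotient_map_saturated_closed_imp_closed_map:
  assumes q: "quotient_map X Y f"
    and sat: "\<And>C. closedin X C \<Longrightarrow> closedin X {x \<in> topspace X. f x \<in> f ` C}"
  shows "closed_map X Y f"
  unfolding closed_map_def
proof (intro allI impI)
  fix C
  assume C: "closedin X C"
  obtain fim: "f ` topspace X = topspace Y"
    and closed_iff: "\<And>U. U \<subseteq> topspace Y \<Longrightarrow> closedin X {x \<in> topspace X. f x \<in> U} = closedin Y U"
    using q by (simp add: quotient_map_closedin)
  have "f ` C \<subseteq> topspace Y"
    using closedin_subset[OF C] fim by blast
  then show "closedin Y (f ` C)"
    using closed_iff sat[OF C] by simp
qed

lemma cpt_space_closed_map_image:
  assumes "cpt_space X" "continuous_map X Y f" "closed_map X Y f" "f ` topspace X = topspace Y"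
  shows "cpt_space Y"
proof -
  have Hausdorff: "Hausdorff_space X"
    using assms(1) by (simp add: cpt_space_def)
  have "compactin X (topspace X)"
    using assms(1) by (simp add: cpt_space_def compact_space_def)
  then have "compactin Y (f ` topspace X)"
    by (rule image_compactin[OF _ assms(2)])
  then have "compact_space Y"
    using assms(4) by (simp add: compact_space_def)
  moreover have "normal_space X"
    using assms(1) Hausdorff by (simp add: cpt_space_def compact_Hausdorff_or_regular_imp_normal_space)
  then have "normal_space Y"
    using assms(2-4) by (rule normal_space_continuous_closed_map_image)
  moreover have "t1_space Y"
    using assms(3,4) Hausdorff_imp_t1_space[OF Hausdorff] by (rule t1_space_closed_map_image)
  ultimately show ?thesis
    by (simp add: cpt_space_def normal_t1_imp_Hausdorff_space)
qed

lemma cpt_space_closed_subtopology: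
  "cpt_space X \<Longrightarrow> closedin X S \<Longrightarrow> cpt_space (subtopology X S)"
  unfolding cpt_space_def
  by (metis Hausdorff_space_subtopology closedin_compact_space compact_space_subtopology)

lemma in_class_homeomorphic:
  "in_class X \<C> \<Longrightarrow> Y homeomorphic_space X \<Longrightarrow> in_class Y \<C>"
proof -
  assume "in_class X \<C>" and YX: "Y homeomorphic_space X"
  then obtain Z where "Z \<in> \<C>" and "X homeomorphic_space Z"
    unfolding in_class_def by blast
  then show "in_class Y \<C>"
    unfolding in_class_def using homeomorphic_space_trans[OF YX] by blast
qed

lemma obtain_fibre_representatives:
  obtains r where "\<And>x. x \<in> F \<Longrightarrow> r x \<in> F \<and> g (r x) = g x"
    and "\<And>x. x \<notin> F \<Longrightarrow> r x = x"
    and "\<And>x y. x \<in> F \<Longrightarrow> y \<in> F \<Longrightarrow> g x = g y \<Longrightarrow> r x = r y"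
proof -
  define r where "r x = (if x \<in> F then SOME z. z \<in> F \<and> g z = g x else x)" for x
  have "r x \<in> F \<and> g (r x) = g x" if "x \<in> F" for x
  proof -
    have "(SOME z. z \<in> F \<and> g z = g x) \<in> F \<and> g (SOME z. z \<in> F \<and> g z = g x) = g x"
      by (rule someI[of _ x]) (simp add: that)
    then show ?thesis
      using that by (simp only: r_def if_True)
  qed
  moreover have "r x = x" if "x \<notin> F" for x
    using that by (simp add: r_def)
  moreover have "r x = r y" if "x \<in> F" "y \<in> F" "g x = g y" for x y
    using that by (simp add: r_def)
  ultimately show thesis
    by (rule that)
qed

(*
  The adjunction space is built on the carrier of K itself: r moves each point of F
  to a chosen representative of its g-fibre and fixes the rest, and the quotient
  topology of r does the collapsing.  This keeps the continuous image of K on the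
  type of K, as perp_class requires.
*)
context
  fixes K :: "'a topology" and F :: "'a set" and L :: "'b topology"
    and g :: "'a \<Rightarrow> 'b" and r :: "'a \<Rightarrow> 'a"
  assumes cpt_K: "cpt_space K" and closed_F: "closedin K F"
    and cpt_L: "cpt_space L" and cont_g: "continuous_map (subtopology K F) L g"
    and g_onto: "g ` F = topspace L"
    and r_fibre: "\<And>x. x \<in> F \<Longrightarrow> r x \<in> F \<and> g (r x) = g x"
    and r_outside: "\<And>x. x \<notin> F \<Longrightarrow> r x = x"
    and r_const: "\<And>x y. x \<in> F \<Longrightarrow> y \<in> F \<Longrightarrow> g x = g y \<Longrightarrow> r x = r y"
begin

lemma fibre_collapse_image_iff:
  "r x \<in> r ` C \<longleftrightarrow> x \<in> C - F \<or> (x \<in> F \<and> g x \<in> g ` (C \<inter> F))"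
proof (cases "x \<in> F")
  case True
  have "r x \<in> r ` C \<longleftrightarrow> g x \<in> g ` (C \<inter> F)"
  proof
    assume "r x \<in> r ` C"
    then obtain c where c: "r x = r c" "c \<in> C"
      by (rule imageE)
    have "c \<in> F"
      using c r_fibre[OF True] r_outside by (cases "c \<in> F") auto
    have "g c = g (r c)"
      using r_fibre[OF \<open>c \<in> F\<close>] by simp
    also have "\<dots> = g x"
      using c(1) r_fibre[OF True] by simp
    finally have "g c = g x" .
    then show "g x \<in> g ` (C \<inter> F)"
      using c \<open>c \<in> F\<close> by (metis IntI image_eqI)
  next
    assume "g x \<in> g ` (C \<inter> F)"
    then obtain c where "c \<in> C" "c \<in> F" "g c = g x"
      by auto
    then show "r x \<in> r ` C"
      using r_const[OF \<open>c \<in> F\<close> True] by (metis imageI)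
  qed
  then show ?thesis
    using True by blast
next
  case False
  have "r x \<in> r ` C \<longleftrightarrow> x \<in> C"
  proof
    assume "r x \<in> r ` C"
    then obtain c where c: "c \<in> C" "r c = x"
      using r_outside[OF False] by auto
    then have "c \<notin> F"
      using False r_fibre by blast
    then show "x \<in> C"
      using c r_outside by simp
  qed (metis r_outside[OF False] imageI)
  then show ?thesis
    using False by blast
qed

lemma closedin_fibre_saturation:
  assumes "closedin K C"
  shows "closedin K {x \<in> topspace K. r x \<in> r ` C}"
proof -
  have "compactin L (g ` (C \<inter> F))"
  proof (rule image_compactin[OF _ cont_g])
    have "closedin (subtopology K F) (C \<inter> F)"
      using assms unfolding closedin_subtopology by blast
    then show "compactin (subtopology K F) (C \<inter> F)"
      using cpt_K closed_F closedin_compact_space cpt_space_closed_subtopology cpt_space_def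
      by blast
  qed
  then have "closedin L (g ` (C \<inter> F))"
    using cpt_L compactin_imp_closedin cpt_space_def by blast
  moreover have "topspace (subtopology K F) = F"
    using closedin_subset[OF closed_F] by (rule topspace_subtopology_subset)
  ultimately have "closedin (subtopology K F) {x \<in> F. g x \<in> g ` (C \<inter> F)}"
    using closedin_continuous_map_preimage[OF cont_g] by metis
  then have "closedin K {x \<in> F. g x \<in> g ` (C \<inter> F)}"
    using closed_F by (rule closedin_trans_full)
  moreover have "{x \<in> topspace K. r x \<in> r ` C} = C \<union> {x \<in> F. g x \<in> g ` (C \<inter> F)}"
    using closedin_subset[OF assms] closedin_subset[OF closed_F]
    by (auto simp: fibre_collapse_image_iff)
  ultimately show ?thesis
    using closedin_Un[OF assms] by simp
qed

lemma closed_map_fibre_collapse: "closed_map K (quotient_topology K r) r"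
  using quotient_map_quotient_topology closedin_fibre_saturation
  by (rule quotient_map_saturated_closed_imp_closed_map)

lemma cpt_space_fibre_collapse: "cpt_space (quotient_topology K r)"
  by (rule cpt_space_closed_map_image[OF cpt_K
        quotient_imp_continuous_map[OF quotient_map_quotient_topology]
        closed_map_fibre_collapse topspace_quotient_topology[symmetric]])

lemma closedin_fibre_collapse_image: "closedin (quotient_topology K r) (r ` F)"
  using closed_map_fibre_collapse closed_F unfolding closed_map_def by blast

lemma quotient_map_fibre_collapse_restriction:
  "quotient_map (subtopology K F) (subtopology (quotient_topology K r) (r ` F)) r"
proof (rule continuous_closed_imp_quotient_map)
  have F_sub: "F \<subseteq> topspace K"
    using closed_F by (rule closedin_subset)
  then have top_F: "topspace (subtopology K F) = F"
    by (rule topspace_subtopology_subset)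
  show "continuous_map (subtopology K F) (subtopology (quotient_topology K r) (r ` F)) r"
    using quotient_imp_continuous_map[OF quotient_map_quotient_topology] top_F
    by (intro continuous_map_into_subtopology continuous_map_from_subtopology) auto
  have "{x \<in> topspace K. r x \<in> r ` F} = F"
    using F_sub by (auto simp: fibre_collapse_image_iff)
  with closed_map_fibre_collapse
  show "closed_map (subtopology K F) (subtopology (quotient_topology K r) (r ` F)) r"
    by (rule closed_map_restriction)
  have "topspace (subtopology (quotient_topology K r) (r ` F)) = r ` F"
    using F_sub by (intro topspace_subtopology_subset) (auto simp: topspace_quotient_topology)
  then show "r ` topspace (subtopology K F) = topspace (subtopology (quotient_topology K r) (r ` F))"
    by (simp only: top_F)
qed

lemma fibre_collapse_subspace_homeomorphic:
  "subtopology (quotient_topology K r) (r ` F) homeomorphic_space L"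
proof -
  let ?Q = "quotient_topology K r"
  have F_sub: "F \<subseteq> topspace K"
    using closed_F by (rule closedin_subset)
  have top_F: "topspace (subtopology K F) = F"
    using F_sub by (rule topspace_subtopology_subset)
  have top_M: "topspace (subtopology ?Q (r ` F)) = r ` F"
    using F_sub by (intro topspace_subtopology_subset) (auto simp: topspace_quotient_topology)
  have "quotient_map (subtopology K F) (subtopology ?Q (r ` F)) r"
    by (rule quotient_map_fibre_collapse_restriction)
  moreover have "continuous_map (subtopology K F) L (g \<circ> r)"
    using cont_g by (rule continuous_map_eq) (simp add: top_F r_fibre)
  ultimately have cont: "continuous_map (subtopology ?Q (r ` F)) L g"
    by (rule continuous_compose_quotient_map)
  have "g ` r ` F = g ` F"
    unfolding image_image using r_fibre by simp
  then have onto: "g ` topspace (subtopology ?Q (r ` F)) = topspace L"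
    by (simp only: top_M g_onto)
  have inj: "inj_on g (topspace (subtopology ?Q (r ` F)))"
    unfolding top_M
  proof (rule inj_onI)
    fix u v
    assume "u \<in> r ` F" "v \<in> r ` F" and g_eq: "g u = g v"
    then obtain x y where "x \<in> F" "y \<in> F" "u = r x" "v = r y"
      by blast
    then show "u = v"
      using g_eq r_fibre r_const by metis
  qed
  have "compact_space (subtopology ?Q (r ` F))"
    using cpt_space_closed_subtopology[OF cpt_space_fibre_collapse closedin_fibre_collapse_image]
    by (simp add: cpt_space_def)
  then have "homeomorphic_map (subtopology ?Q (r ` F)) L g"
    using cont cpt_L onto inj by (simp add: cpt_space_def continuous_imp_homeomorphic_map)
  then show ?thesis
    by (rule homeomorphic_map_imp_homeomorphic_space)
qed

end

lemma obtain_adjunction_space: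
  fixes K :: "'a topology" and L :: "'b topology"
  assumes "cpt_space K" "closedin K F" "cpt_space L"
    and "continuous_map (subtopology K F) L g" "g ` F = topspace L"
  obtains Q :: "'a topology" and q M
  where "cpt_space Q" "continuous_map K Q q" "q ` topspace K = topspace Q"
    and "closedin Q M" "subtopology Q M homeomorphic_space L"
proof -
  obtain r where r: "\<And>x. x \<in> F \<Longrightarrow> r x \<in> F \<and> g (r x) = g x"
    "\<And>x. x \<notin> F \<Longrightarrow> r x = x"
    "\<And>x y. x \<in> F \<Longrightarrow> y \<in> F \<Longrightarrow> g x = g y \<Longrightarrow> r x = r y"
    by (fact obtain_fibre_representatives)
  show thesis
  proof (rule that)
    show "cpt_space (quotient_topology K r)"
      by (rule cpt_space_fibre_collapse[OF assms r])
    show "continuous_map K (quotient_topology K r) r"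
      by (rule quotient_imp_continuous_map[OF quotient_map_quotient_topology])
    show "r ` topspace K = topspace (quotient_topology K r)"
      by (simp add: topspace_quotient_topology)
    show "closedin (quotient_topology K r) (r ` F)"
      by (rule closedin_fibre_collapse_image[OF assms r])
    show "subtopology (quotient_topology K r) (r ` F) homeomorphic_space L"
      by (rule fibre_collapse_subspace_homeomorphic[OF assms r])
  qed
qed

lemma continuous_map_onto_closed_subspace:
  assumes f: "continuous_map K L f" "f ` topspace K = topspace L" and M: "closedin L M"
  shows "closedin K {x \<in> topspace K. f x \<in> M}"
    and "continuous_map (subtopology K {x \<in> topspace K. f x \<in> M}) (subtopology L M) f"
    and "f ` {x \<in> topspace K. f x \<in> M} = topspace (subtopology L M)"
proof -
  show "closedin K {x \<in> topspace K. f x \<in> M}"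
    using f(1) M by (rule closedin_continuous_map_preimage)
  show "continuous_map (subtopology K {x \<in> topspace K. f x \<in> M}) (subtopology L M) f"
    using f(1) by (intro continuous_map_into_subtopology continuous_map_from_subtopology) auto
  have "f ` {x \<in> topspace K. f x \<in> M} = M"
  proof
    show "M \<subseteq> f ` {x \<in> topspace K. f x \<in> M}"
    proof
      fix y
      assume "y \<in> M"
      then have "y \<in> f ` topspace K"
        using f(2) closedin_subset[OF M] by blast
      then show "y \<in> f ` {x \<in> topspace K. f x \<in> M}"
        using \<open>y \<in> M\<close> by blast
    qed
  qed blast
  then show "f ` {x \<in> topspace K. f x \<in> M} = topspace (subtopology L M)"
    by (simp only: topspace_subtopology_subset[OF closedin_subset[OF M]])
qed

lemma perp_classD:
  fixes K L :: "'a topology"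
  assumes "K \<in> perp_class \<C>" "closedin K F" "cpt_space L"
    "continuous_map (subtopology K F) L f" "f ` F = topspace L" "in_class L \<C>"
  shows "metrizable_space L"
proof -
  have "\<forall>F (L::'a topology) f. closedin K F \<and> cpt_space L \<and> continuous_map (subtopology K F) L f \<and>
      f ` F = topspace L \<and> in_class L \<C> \<longrightarrow> metrizable_space L"
    using assms(1) unfolding perp_class_def mem_Collect_eq by (rule conjunct2)
  then have "closedin K F \<and> cpt_space L \<and> continuous_map (subtopology K F) L f \<and>
      f ` F = topspace L \<and> in_class L \<C> \<longrightarrow> metrizable_space L"
    by (elim allE)
  then show ?thesis
    using assms(2-6) by simp
qed

lemma perp_classI:
  fixes K :: "'a topology"
  assumes "cpt_space K"
    and "\<And>F (L::'a topology) f. closedin K F \<Longrightarrow> cpt_space L \<Longrightarrow>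
      continuous_map (subtopology K F) L f \<Longrightarrow> f ` F = topspace L \<Longrightarrow> in_class L \<C> \<Longrightarrow>
      metrizable_space L"
  shows "K \<in> perp_class \<C>"
  unfolding perp_class_def
proof (intro CollectI conjI allI impI assms(1); elim conjE)
  show "metrizable_space L" if "closedin K F" "cpt_space L" "continuous_map (subtopology K F) L f"
    "f ` F = topspace L" "in_class L \<C>" for F and L :: "'a topology" and f
    using that by (rule assms(2))
qed

lemma perp_class_closed_subspace_of_image_metrizable:
  fixes K L :: "'a topology"
  assumes "K \<in> perp_class \<C>" "cpt_space L" "continuous_map K L f" "f ` topspace K = topspace L"
    and "closedin L M" "in_class (subtopology L M) \<C>"
  shows "metrizable_space (subtopology L M)"
proof -
  note preimage = continuous_map_onto_closed_subspace[OF assms(3-5)]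
  show ?thesis
    by (rule perp_classD[OF assms(1) preimage(1) cpt_space_closed_subtopology[OF assms(2,5)]
          preimage(2,3) assms(6)])
qed

lemma perp_classI_closed_subspaces_of_images:
  fixes K :: "'a topology"
  assumes cpt_K: "cpt_space K"
    and images: "\<And>(L::'a topology) f M. cpt_space L \<Longrightarrow> continuous_map K L f \<Longrightarrow>
      f ` topspace K = topspace L \<Longrightarrow> closedin L M \<Longrightarrow> in_class (subtopology L M) \<C> \<Longrightarrow>
      metrizable_space (subtopology L M)"
  shows "K \<in> perp_class \<C>"
proof (rule perp_classI[OF cpt_K])
  fix F and L :: "'a topology" and g
  assume adjunction_data: "closedin K F" "cpt_space L" "continuous_map (subtopology K F) L g"
    "g ` F = topspace L" and "in_class L \<C>"
  obtain Q :: "'a topology" and q M where Q: "cpt_space Q" "continuous_map K Q q"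
    "q ` topspace K = topspace Q" "closedin Q M" and QM: "subtopology Q M homeomorphic_space L"
    by (fact obtain_adjunction_space[OF cpt_K adjunction_data])
  have "in_class (subtopology Q M) \<C>"
    using \<open>in_class L \<C>\<close> QM by (rule in_class_homeomorphic)
  with Q have "metrizable_space (subtopology Q M)"
    by (rule images)
  then show "metrizable_space L"
    using homeomorphic_metrizable_space[OF QM] by simp
qed

theorem lemma2p3:
  fixes \<C> :: "'c topology set"
  assumes "\<forall>Y\<in>\<C>. cpt_space Y"
  shows "(perp_class \<C> :: 'a topology set) =
    {K. cpt_space K \<and>
      (\<forall>(L::'a topology) f M. cpt_space L \<and> continuous_map K L f \<and>
         f ` topspace K = topspace L \<and> closedin L M \<and> in_class (subtopology L M) \<C>
         \<longrightarrow> metrizable_space (subtopology L M))}"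
proof (rule set_eqI, unfold mem_Collect_eq, intro iffI conjI allI impI; (elim conjE)?)
  fix K :: "'a topology"
  assume "K \<in> perp_class \<C>"
  then show "cpt_space K"
    by (simp add: perp_class_def)
next
  fix K L :: "'a topology" and f M
  assume "K \<in> perp_class \<C>" "cpt_space L" "continuous_map K L f" "f ` topspace K = topspace L"
    "closedin L M" "in_class (subtopology L M) \<C>"
  then show "metrizable_space (subtopology L M)"
    by (rule perp_class_closed_subspace_of_image_metrizable)
next
  fix K :: "'a topology"
  assume "cpt_space K" and images: "\<forall>(L::'a topology) f M. cpt_space L \<and>
    continuous_map K L f \<and> f ` topspace K = topspace L \<and> closedin L M \<and>
    in_class (subtopology L M) \<C> \<longrightarrow> metrizable_space (subtopology L M)"
  then show "K \<in> perp_class \<C>"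
    by (intro perp_classI_closed_subspaces_of_images) simp_all
qed

end
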